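(* Let $p$ be a prime, let $\mathcal{F}$ be a saturated fusion system on a finite $p$-group $S$, and let $\Omega$ be a characteristic biset for $\mathcal{F}$. Consider the square matrix \[ \bigl( |P\backslash \Omega /Q| \bigr)_{P,Q}, \] whose rows and columns are indexed by the $\mathcal{F}$-conjugacy classes of subgroups of $S$ (with $P,Q$ representatives) and whose $(P,Q)$-entry is the number of $(P,Q)$-orbits of $\Omega$ (orbits of $P\times Q$ acting by $(u,v)\cdot x=uxv^{-1}$). Then the rank of this matrix (over $\mathbb{Q}$) is equal to the number of $\mathcal{F}$-conjugacy classes of cyclic subgroups of $S$.
   Context: A saturated fusion system $\mathcal{F}$ on a finite $p$-group $S$ is a category whose objects are the subgroups of $S$ and whose morphisms are injective group homomorphisms, containing conjugations by elements of $S$, closed under restriction and inverses, and satisfying the Broto–Levi–Oliver saturation axioms. $P,P'\leq S$ are $\mathcal{F}$-conjugate if some morphism of $\mathcal{F}$ is an isomorphism $P\to P'$. An $(S,S)$-biset is a finite set with commuting left and right $S$-actions; it is viewed as a left $S\times S$-set via $(s,t)\cdot x = sxt^{-1}$. A left $S$-set $X$ is $\mathcal{F}$-stable if for every $P\leq S$ and every morphism $\varphi\colon P\to S$ in $\mathcal{F}$, the $P$-sets obtained by restricting the $S$-action along the inclusion $P\hookrightarrow S$ and along $\varphi$ are isomorphic. An $(S,S)$-biset is $\mathcal{F}$-stable if, as a left $S\times S$-set, it is $(\mathcal{F}\times\mathcal{F})$-stable (i.e. stable under restriction along $\varphi$ on the left and $\psi$ on the right for $\mathcal{F}$-morphisms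 $\varphi,\psi$). It is $\mathcal{F}$-generated if every isotropy subgroup of the left $S\times S$-action is of the form $\Delta(P,\varphi)=\{(u,\varphi(u))\mid u\in P\}$ with $P\leq S$ and $\varphi\colon P\to S$ in $\mathcal{F}$. A characteristic biset for $\mathcal{F}$ is a finite $(S,S)$-biset $\Omega$ that is $\mathcal{F}$-stable, $\mathcal{F}$-generated, and such that $|\Omega|/|S|$ is not divisible by $p$. *)

theory Defs
  imports "HOL-Algebra.Elementary_Groups" "Jordan_Normal_Form.DL_Rank"
begin

text \<open>A fusion system on S is encoded by the predicate F P phi, meaning that
  phi restricted to P is a morphism P -> S of the fusion system.  Since
  Hom(P,Q) is the set of morphisms P -> S with image in Q, this loses nothing.\<close>

definition fs_conj :: "('a, 'b) monoid_scheme \<Rightarrow> 'a \<Rightarrow> 'a \<Rightarrow> 'a" where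
  "fs_conj S g x = g \<otimes>\<^bsub>S\<^esub> x \<otimes>\<^bsub>S\<^esub> inv\<^bsub>S\<^esub> g"

definition fs_normalizer :: "('a, 'b) monoid_scheme \<Rightarrow> 'a set \<Rightarrow> 'a set" where
  "fs_normalizer S P = {g \<in> carrier S. fs_conj S g ` P = P}"

definition fs_centralizer :: "('a, 'b) monoid_scheme \<Rightarrow> 'a set \<Rightarrow> 'a set" where
  "fs_centralizer S P = {g \<in> carrier S. \<forall>x\<in>P. g \<otimes>\<^bsub>S\<^esub> x = x \<otimes>\<^bsub>S\<^esub> g}"

definition fusion_system :: "('a, 'b) monoid_scheme \<Rightarrow> ('a set \<Rightarrow> ('a \<Rightarrow> 'a) \<Rightarrow> bool) \<Rightarrow> bool" where
  "fusion_system S F \<longleftrightarrow>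
     (\<forall>P \<phi>. F P \<phi> \<longrightarrow> subgroup P S \<and> \<phi> \<in> hom (S\<lparr>carrier := P\<rparr>) S \<and> inj_on \<phi> P) \<and>
     (\<forall>P \<phi> \<psi>. F P \<phi> \<and> (\<forall>x\<in>P. \<psi> x = \<phi> x) \<longrightarrow> F P \<psi>) \<and>
     (\<forall>P g. subgroup P S \<and> g \<in> carrier S \<longrightarrow> F P (fs_conj S g)) \<and>
     (\<forall>P Q \<phi>. F P \<phi> \<and> subgroup Q S \<and> Q \<subseteq> P \<longrightarrow> F Q \<phi>) \<and>
     (\<forall>P \<phi> \<psi>. F P \<phi> \<and> F (\<phi> ` P) \<psi> \<longrightarrow> F P (\<psi> \<circ> \<phi>)) \<and>
     (\<forall>P \<phi>. F P \<phi> \<longrightarrow> F (\<phi> ` P) (inv_into P \<phi>))"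

definition fconj :: "('a, 'b) monoid_scheme \<Rightarrow> ('a set \<Rightarrow> ('a \<Rightarrow> 'a) \<Rightarrow> bool) \<Rightarrow> 'a set \<Rightarrow> 'a set \<Rightarrow> bool" where
  "fconj S F P Q \<longleftrightarrow> (\<exists>\<phi>. F P \<phi> \<and> \<phi> ` P = Q)"

definition fully_centralized :: "('a, 'b) monoid_scheme \<Rightarrow> ('a set \<Rightarrow> ('a \<Rightarrow> 'a) \<Rightarrow> bool) \<Rightarrow> 'a set \<Rightarrow> bool" where
  "fully_centralized S F P \<longleftrightarrow>
     (\<forall>Q. fconj S F P Q \<longrightarrow> card (fs_centralizer S Q) \<le> card (fs_centralizer S P))"

definition fully_normalized :: "('a, 'b) monoid_scheme \<Rightarrow> ('a set \<Rightarrow> ('a \<Rightarrow> 'a) \<Rightarrow> bool) \<Rightarrow> 'a set \<Rightarrow> bool" where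
  "fully_normalized S F P \<longleftrightarrow>
     (\<forall>Q. fconj S F P Q \<longrightarrow> card (fs_normalizer S Q) \<le> card (fs_normalizer S P))"

definition autF :: "('a, 'b) monoid_scheme \<Rightarrow> ('a set \<Rightarrow> ('a \<Rightarrow> 'a) \<Rightarrow> bool) \<Rightarrow> 'a set \<Rightarrow> ('a \<Rightarrow> 'a) set" where
  "autF S F P = {restrict \<phi> P | \<phi>. F P \<phi> \<and> \<phi> ` P = P}"

definition autS :: "('a, 'b) monoid_scheme \<Rightarrow> 'a set \<Rightarrow> ('a \<Rightarrow> 'a) set" where
  "autS S P = {restrict (fs_conj S g) P | g. g \<in> fs_normalizer S P}"

definition autS_sylow :: "nat \<Rightarrow> ('a, 'b) monoid_scheme \<Rightarrow> ('a set \<Rightarrow> ('a \<Rightarrow> 'a) \<Rightarrow> bool) \<Rightarrow> 'a set \<Rightarrow> bool" where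
  "autS_sylow p S F P \<longleftrightarrow>
     (\<exists>k m. card (autS S P) = p ^ k \<and> card (autF S F P) = p ^ k * m \<and> \<not> p dvd m)"

text \<open>N_phi = {g in N_S(P) | phi c_g phi^-1 in Aut_S(phi(P))}.\<close>

definition N_phi :: "('a, 'b) monoid_scheme \<Rightarrow> 'a set \<Rightarrow> ('a \<Rightarrow> 'a) \<Rightarrow> 'a set" where
  "N_phi S P \<phi> = {g \<in> fs_normalizer S P. \<exists>h \<in> fs_normalizer S (\<phi> ` P).
       \<forall>x \<in> \<phi> ` P. \<phi> (fs_conj S g (inv_into P \<phi> x)) = fs_conj S h x}"

text \<open>Saturation in the sense of Broto--Levi--Oliver.\<close>

definition saturated_fusion_system ::
  "nat \<Rightarrow> ('a, 'b) monoid_scheme \<Rightarrow> ('a set \<Rightarrow> ('a \<Rightarrow> 'a) \<Rightarrow> bool) \<Rightarrow> bool" where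
  "saturated_fusion_system p S F \<longleftrightarrow>
     fusion_system S F \<and>
     (\<forall>P. subgroup P S \<and> fully_normalized S F P \<longrightarrow>
          fully_centralized S F P \<and> autS_sylow p S F P) \<and>
     (\<forall>P \<phi>. F P \<phi> \<and> fully_centralized S F (\<phi> ` P) \<longrightarrow>
          (\<exists>\<psi>. F (N_phi S P \<phi>) \<psi> \<and> (\<forall>x\<in>P. \<psi> x = \<phi> x)))"

definition biset :: "('a, 'b) monoid_scheme \<Rightarrow> 'c set \<Rightarrow> ('a \<Rightarrow> 'c \<Rightarrow> 'c) \<Rightarrow> ('c \<Rightarrow> 'a \<Rightarrow> 'c) \<Rightarrow> bool" where
  "biset S \<Omega> L R \<longleftrightarrow> finite \<Omega> \<and>
     (\<forall>g\<in>carrier S. \<forall>x\<in>\<Omega>. L g x \<in> \<Omega> \<and> R x g \<in> \<Omega>) \<and>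
     (\<forall>x\<in>\<Omega>. L \<one>\<^bsub>S\<^esub> x = x \<and> R x \<one>\<^bsub>S\<^esub> = x) \<and>
     (\<forall>g\<in>carrier S. \<forall>h\<in>carrier S. \<forall>x\<in>\<Omega>.
        L (g \<otimes>\<^bsub>S\<^esub> h) x = L g (L h x) \<and>
        R x (g \<otimes>\<^bsub>S\<^esub> h) = R (R x g) h \<and>
        L g (R x h) = R (L g x) h)"

definition bact :: "('a, 'b) monoid_scheme \<Rightarrow> ('a \<Rightarrow> 'c \<Rightarrow> 'c) \<Rightarrow> ('c \<Rightarrow> 'a \<Rightarrow> 'c) \<Rightarrow> 'a \<times> 'a \<Rightarrow> 'c \<Rightarrow> 'c" where
  "bact S L R st x = L (fst st) (R x (inv\<^bsub>S\<^esub> (snd st)))"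

text \<open>(F x F)-stability: for every subgroup T of S x S and every morphism of the product
  fusion system F x F defined on T (i.e. a restriction of phi x psi with phi, psi in F),
  the T-sets obtained by restriction along the inclusion and along phi x psi are isomorphic.\<close>

definition biset_stable ::
  "('a, 'b) monoid_scheme \<Rightarrow> ('a set \<Rightarrow> ('a \<Rightarrow> 'a) \<Rightarrow> bool) \<Rightarrow> 'c set \<Rightarrow> ('a \<Rightarrow> 'c \<Rightarrow> 'c) \<Rightarrow> ('c \<Rightarrow> 'a \<Rightarrow> 'c) \<Rightarrow> bool" where
  "biset_stable S F \<Omega> L R \<longleftrightarrow>
     (\<forall>P Q \<phi> \<psi> T. F P \<phi> \<and> F Q \<psi> \<and> subgroup T (S \<times>\<times> S) \<and> T \<subseteq> P \<times> Q \<longrightarrow>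
        (\<exists>f. bij_betw f \<Omega> \<Omega> \<and>
             (\<forall>u v x. (u, v) \<in> T \<and> x \<in> \<Omega> \<longrightarrow>
                 f (bact S L R (u, v) x) = bact S L R (\<phi> u, \<psi> v) (f x))))"

definition biset_generated ::
  "('a, 'b) monoid_scheme \<Rightarrow> ('a set \<Rightarrow> ('a \<Rightarrow> 'a) \<Rightarrow> bool) \<Rightarrow> 'c set \<Rightarrow> ('a \<Rightarrow> 'c \<Rightarrow> 'c) \<Rightarrow> ('c \<Rightarrow> 'a \<Rightarrow> 'c) \<Rightarrow> bool" where
  "biset_generated S F \<Omega> L R \<longleftrightarrow>
     (\<forall>x\<in>\<Omega>. \<exists>P \<phi>. F P \<phi> \<and>
        {st \<in> carrier S \<times> carrier S. bact S L R st x = x} = {(u, \<phi> u) | u. u \<in> P})"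

definition characteristic_biset ::
  "nat \<Rightarrow> ('a, 'b) monoid_scheme \<Rightarrow> ('a set \<Rightarrow> ('a \<Rightarrow> 'a) \<Rightarrow> bool) \<Rightarrow> 'c set \<Rightarrow> ('a \<Rightarrow> 'c \<Rightarrow> 'c) \<Rightarrow> ('c \<Rightarrow> 'a \<Rightarrow> 'c) \<Rightarrow> bool" where
  "characteristic_biset p S F \<Omega> L R \<longleftrightarrow>
     biset S \<Omega> L R \<and> biset_stable S F \<Omega> L R \<and> biset_generated S F \<Omega> L R \<and>
     (\<exists>k. card \<Omega> = k * card (carrier S) \<and> \<not> p dvd k)"

definition biset_orbit_count ::
  "('a, 'b) monoid_scheme \<Rightarrow> 'c set \<Rightarrow> ('a \<Rightarrow> 'c \<Rightarrow> 'c) \<Rightarrow> ('c \<Rightarrow> 'a \<Rightarrow> 'c) \<Rightarrow> 'a set \<Rightarrow> 'a set \<Rightarrow> nat" where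
  "biset_orbit_count S \<Omega> L R P Q =
     card ((\<lambda>x. {bact S L R (u, v) x | u v. u \<in> P \<and> v \<in> Q}) ` \<Omega>)"

end

theory Submission
  imports Defs "Jordan_Normal_Form.DL_Rank_Submatrix" "HOL-Algebra.Group_Action"
    "HOL-Computational_Algebra.Primes"
begin

(* By Burnside's lemma, |P\<Omega>/Q| |P| |Q| is the sum over u \<in> P, v \<in> Q of the number N(u,v) of
   points fixed by (u,v).  As \<Omega> is F-generated, (u,v) fixes a point only if v = \<phi>(u) for some
   morphism \<phi> of F, and then v is determined by u and the point; F-stability makes N constant on
   fused pairs, and the p'-index of \<Omega> forces N(u,u) > 0.  Hence the row sum \<Sum>_{v\<in>Q} N(u,v)
   depends only on the F-class of the cyclic group <u>, which factors the matrix through the classes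
   of cyclic subgroups and bounds its rank.  Conversely N(x,y) = c(x) [x fused to y] with c > 0
   constant on fusion classes, so the bilinear form of N is positive semidefinite and its null
   vectors have zero sum on every fusion class; testing such a vector against a largest cyclic
   subgroup of non-zero weight shows that the block of the matrix on cyclic subgroups is
   nonsingular. *)

lemma bij_betw_pick:
  assumes J: "finite J"
  shows "bij_betw (pick J) {..<card J} J"
proof (rule bij_betw_imageI)
  show "inj_on (pick J) {..<card J}"
  proof (rule inj_onI)
    fix a b assume a: "a \<in> {..<card J}" and b: "b \<in> {..<card J}" and eq: "pick J a = pick J b"
    have "a = card {c \<in> J. c < pick J a}" by (rule card_pick[symmetric]) (use a in simp)
    also have "\<dots> = card {c \<in> J. c < pick J b}" by (simp only: eq)
    also have "\<dots> = b" by (rule card_pick) (use b in simp)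
    finally show "a = b" .
  qed
  show "pick J ` {..<card J} = J"
  proof
    show "pick J ` {..<card J} \<subseteq> J" by (rule image_subsetI, rule pick_in_set) simp
    show "J \<subseteq> pick J ` {..<card J}"
    proof
      fix j assume j: "j \<in> J"
      have "{a \<in> J. a < j} \<subset> J" using j by auto
      then have "card {a \<in> J. a < j} < card J" by (rule psubset_card_mono[OF J])
      then show "j \<in> pick J ` {..<card J}"
        by (intro image_eqI[where x = "card {a \<in> J. a < j}"]) (simp_all add: pick_card_in_set[OF j])
    qed
  qed
qed

lemma submatrix_mult_vec_index:
  assumes A: "A \<in> carrier_mat n n" and J: "J \<subseteq> {..<n}"
    and u: "u \<in> carrier_vec (card J)" and a: "a < card J"
  shows "(submatrix A J J *\<^sub>v u) $ a = (\<Sum>j\<in>J. A $$ (pick J a, j) * u $ card {c \<in> J. c < j})"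
proof -
  have Jn: "{i. i < n \<and> i \<in> J} = J" using J by auto
  have dA: "dim_row A = n" "dim_col A = n" using A by auto
  have "(submatrix A J J *\<^sub>v u) $ a = (\<Sum>b<card J. submatrix A J J $$ (a, b) * u $ b)"
    using a u by (simp add: dim_submatrix dA Jn scalar_prod_def atLeast0LessThan)
  also have "\<dots> = (\<Sum>b<card J. A $$ (pick J a, pick J b) * u $ card {c \<in> J. c < pick J b})"
    by (rule sum.cong[OF refl]) (simp add: submatrix_index dA Jn card_pick a)
  also have "\<dots> = (\<Sum>j\<in>J. A $$ (pick J a, j) * u $ card {c \<in> J. c < j})"
    by (rule sum.reindex_bij_betw[OF bij_betw_pick[OF finite_subset[OF J finite_lessThan]],
          where g = "\<lambda>j. A $$ (pick J a, j) * u $ card {c \<in> J. c < j}"])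
  finally show ?thesis .
qed

context vec_space
begin

lemma rank_le_card_of_cols_in_span:
  assumes A: "A \<in> carrier_mat n nc" and B: "B \<subseteq> carrier_vec n" "finite B"
    and cols: "set (cols A) \<subseteq> span B"
  shows "rank A \<le> card B"
proof -
  obtain T where T: "maximal T (\<lambda>T. T \<subseteq> set (cols A) \<and> lin_indpt T)"
    using maximal_exists[of "\<lambda>T. T \<subseteq> set (cols A) \<and> lin_indpt T" "card (set (cols A))" "{}"]
    by (meson List.finite_set card_mono empty_iff empty_subsetI finite_lin_indpt2 rev_finite_subset)
  then have rank: "rank A = card T" using rank_card_indpt[OF A] by simp
  have T_cols: "T \<subseteq> set (cols A)" and T_indpt: "lin_indpt T"
    using T unfolding maximal_def by auto
  have T_fin: "finite T" using T_cols List.finite_set rev_finite_subset by metis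
  have "T \<subseteq> span B" using T_cols cols by auto
  from replacement[OF T_fin B(2) B(1) T_indpt this] have "card T \<le> card B"
    by (elim exE conjE) linarith
  then show ?thesis using rank by simp
qed

lemma vec_sum_in_span:
  assumes I: "finite I" and f: "f ` I \<subseteq> carrier_vec n" and J: "J \<subseteq> I"
  shows "vec n (\<lambda>i. \<Sum>k\<in>J. c k * f k $ i) \<in> span (f ` I)"
proof -
  have sub: "submodule class_ring (span (f ` I)) V" by (rule span_is_submodule[OF f])
  have "finite J" using J I finite_subset by blast
  then show ?thesis using J
  proof (induction J rule: finite_induct)
    case empty
    show ?case using submodule.zero_closed[OF sub] by (simp add: zero_vec_def)
  next
    case (insert k J)
    have fk: "f k \<in> carrier_vec n" "f k \<in> span (f ` I)"
      using insert.prems f in_own_span[OF f] by auto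
    have IH: "vec n (\<lambda>i. \<Sum>k\<in>J. c k * f k $ i) \<in> span (f ` I)" using insert by simp
    have "c k \<cdot>\<^sub>v f k \<in> span (f ` I)"
      using submodule.smult_closed[OF sub _ fk(2), of "c k"] by simp
    moreover have "vec n (\<lambda>i. \<Sum>k\<in>insert k J. c k * f k $ i)
        = c k \<cdot>\<^sub>v f k + vec n (\<lambda>i. \<Sum>k\<in>J. c k * f k $ i)"
      using insert fk by (auto intro!: eq_vecI)
    ultimately show ?case using submodule.m_closed[OF sub _ IH] by simp
  qed
qed

lemma rank_le_card_of_sum_of_products:
  assumes A: "A \<in> carrier_mat n nc" and I: "finite I"
    and entries: "\<And>i j. i < n \<Longrightarrow> j < nc \<Longrightarrow> A $$ (i, j) = (\<Sum>k\<in>I. f k i * g k j)"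
  shows "rank A \<le> card I"
proof -
  define u where "u k = vec n (f k)" for k
  have u: "u ` I \<subseteq> carrier_vec n" unfolding u_def by auto
  have "col A j \<in> span (u ` I)" if j: "j < nc" for j
  proof -
    have "col A j = vec n (\<lambda>i. \<Sum>k\<in>I. g k j * u k $ i)"
      using A j entries unfolding u_def by (auto intro!: eq_vecI simp: mult.commute)
    then show ?thesis using vec_sum_in_span[OF I u order_refl, where c = "\<lambda>k. g k j"] by simp
  qed
  moreover have "dim_col A = nc" using A by simp
  ultimately have "set (cols A) \<subseteq> span (u ` I)" by (auto simp: in_set_conv_nth)
  then have "rank A \<le> card (u ` I)"
    using rank_le_card_of_cols_in_span[OF A u finite_imageI[OF I]] by simp
  also have "\<dots> \<le> card I" by (rule card_image_le[OF I])
  finally show ?thesis .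
qed

lemma rank_ge_card_of_nonsingular_block:
  assumes A: "A \<in> carrier_mat n n" and J: "J \<subseteq> {..<n}"
    and kernel: "\<And>v. (\<And>i. i \<in> J \<Longrightarrow> (\<Sum>j\<in>J. A $$ (i, j) * v j) = 0) \<Longrightarrow> \<forall>j\<in>J. v j = 0"
  shows "card J \<le> rank A"
proof -
  let ?r = "card J"
  have Jn: "{i. i < n \<and> i \<in> J} = J" using J by auto
  have dA: "dim_row A = n" "dim_col A = n" using A by auto
  have block: "submatrix A J J \<in> carrier_mat ?r ?r"
    by (rule carrier_matI) (simp_all add: dim_submatrix dA Jn)
  have pick: "bij_betw (pick J) {..<?r} J"
    by (rule bij_betw_pick[OF finite_subset[OF J finite_lessThan]])
  have "det (submatrix A J J) \<noteq> 0"
  proof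
    assume "det (submatrix A J J) = 0"
    then obtain u where u: "u \<in> carrier_vec ?r" "u \<noteq> 0\<^sub>v ?r" "submatrix A J J *\<^sub>v u = 0\<^sub>v ?r"
      using det_0_iff_vec_prod_zero_field[OF block] by blast
    define v where "v j = u $ card {c \<in> J. c < j}" for j
    have "(\<Sum>j\<in>J. A $$ (i, j) * v j) = 0" if "i \<in> J" for i
    proof -
      have "i \<in> pick J ` {..<?r}" using pick that by (simp add: bij_betw_def)
      then obtain a where a: "a < ?r" "i = pick J a" by auto
      then show ?thesis
        using submatrix_mult_vec_index[OF A J u(1) a(1)] u(3) unfolding v_def by simp
    qed
    then have v0: "\<forall>j\<in>J. v j = 0" by (rule kernel)
    have "u = 0\<^sub>v ?r"
    proof (rule eq_vecI)
      fix b assume "b < dim_vec (0\<^sub>v ?r)"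
      then have b: "b < ?r" by simp
      have "v (pick J b) = u $ b" unfolding v_def using card_pick[of b J] b by simp
      moreover have "v (pick J b) = 0" using v0 pick_in_set[of b J] b by simp
      ultimately show "u $ b = 0\<^sub>v ?r $ b" using b by simp
    qed (use u(1) in simp)
    then show False using u(2) by simp
  qed
  then have "card {j. j < n \<and> j \<in> J} \<le> rank A" by (rule rank_gt_minor[OF A])
  then show ?thesis using Jn by simp
qed

end

lemma sum_sum_bilinear:
  fixes k :: "'x \<Rightarrow> 'x \<Rightarrow> 'r::comm_semiring_1"
  shows "(\<Sum>a\<in>A. \<Sum>b\<in>A. w a * w b * (\<Sum>x\<in>X. \<Sum>y\<in>X. f a x * f b y * k x y))
       = (\<Sum>x\<in>X. \<Sum>y\<in>X. k x y * (\<Sum>a\<in>A. w a * f a x) * (\<Sum>b\<in>A. w b * f b y))"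
proof -
  have "(\<Sum>a\<in>A. \<Sum>b\<in>A. w a * w b * (\<Sum>x\<in>X. \<Sum>y\<in>X. f a x * f b y * k x y))
      = (\<Sum>a\<in>A. \<Sum>b\<in>A. \<Sum>x\<in>X. \<Sum>y\<in>X. k x y * (w a * f a x) * (w b * f b y))"
    by (simp add: sum_distrib_left mult_ac)
  also have "\<dots> = (\<Sum>a\<in>A. \<Sum>x\<in>X. \<Sum>b\<in>A. \<Sum>y\<in>X. k x y * (w a * f a x) * (w b * f b y))"
    by (rule sum.cong[OF refl], rule sum.swap)
  also have "\<dots> = (\<Sum>x\<in>X. \<Sum>a\<in>A. \<Sum>b\<in>A. \<Sum>y\<in>X. k x y * (w a * f a x) * (w b * f b y))"
    by (rule sum.swap)
  also have "\<dots> = (\<Sum>x\<in>X. \<Sum>a\<in>A. \<Sum>y\<in>X. \<Sum>b\<in>A. k x y * (w a * f a x) * (w b * f b y))"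
    by (rule sum.cong[OF refl], rule sum.cong[OF refl], rule sum.swap)
  also have "\<dots> = (\<Sum>x\<in>X. \<Sum>y\<in>X. \<Sum>a\<in>A. \<Sum>b\<in>A. k x y * (w a * f a x) * (w b * f b y))"
    by (rule sum.cong[OF refl], rule sum.swap)
  also have "\<dots> = (\<Sum>x\<in>X. \<Sum>y\<in>X. k x y * (\<Sum>a\<in>A. w a * f a x) * (\<Sum>b\<in>A. w b * f b y))"
  proof (rule sum.cong[OF refl], rule sum.cong[OF refl])
    fix x y assume "x \<in> X" "y \<in> X"
    have "k x y * (\<Sum>a\<in>A. w a * f a x) * (\<Sum>b\<in>A. w b * f b y)
        = k x y * (\<Sum>a\<in>A. \<Sum>b\<in>A. (w a * f a x) * (w b * f b y))"
      by (simp only: mult.assoc sum_product)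
    then show "(\<Sum>a\<in>A. \<Sum>b\<in>A. k x y * (w a * f a x) * (w b * f b y))
        = k x y * (\<Sum>a\<in>A. w a * f a x) * (\<Sum>b\<in>A. w b * f b y)"
      by (simp add: sum_distrib_left mult.assoc)
  qed
  finally show ?thesis .
qed

lemma sum_class_invariant_eq_sum_class_sums:
  fixes h W :: "'x \<Rightarrow> 'r::field_char_0"
  assumes X: "finite X" and r_refl: "\<And>x. x \<in> X \<Longrightarrow> r x x"
    and r_sym: "\<And>x y. x \<in> X \<Longrightarrow> y \<in> X \<Longrightarrow> r x y \<Longrightarrow> r y x"
    and r_trans: "\<And>x y z. x \<in> X \<Longrightarrow> y \<in> X \<Longrightarrow> z \<in> X \<Longrightarrow> r x y \<Longrightarrow> r y z \<Longrightarrow> r x z"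
    and h: "\<And>x y. x \<in> X \<Longrightarrow> y \<in> X \<Longrightarrow> r x y \<Longrightarrow> h x = h y"
  shows "(\<Sum>x\<in>X. h x * W x)
       = (\<Sum>x\<in>X. h x / of_nat (card {y \<in> X. r x y}) * (\<Sum>y\<in>{y \<in> X. r x y}. W y))"
proof -
  define k where "k x = (of_nat (card {y \<in> X. r x y}) :: 'r)" for x
  have k_eq: "k x = k y" if "x \<in> X" "y \<in> X" "r x y" for x y
  proof -
    have "{z \<in> X. r x z} = {z \<in> X. r y z}" using that r_sym r_trans by blast
    then show ?thesis unfolding k_def by simp
  qed
  have k: "k x \<noteq> 0" if "x \<in> X" for x
    using X r_refl[OF that] that unfolding k_def by (auto simp: card_eq_0_iff)
  have "(\<Sum>x\<in>X. h x / k x * (\<Sum>y\<in>{y \<in> X. r x y}. W y))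
      = (\<Sum>x\<in>X. \<Sum>y\<in>X. if r x y then h x / k x * W y else 0)"
    by (simp add: sum_distrib_left sum.inter_filter[OF X, symmetric])
  also have "\<dots> = (\<Sum>y\<in>X. \<Sum>x\<in>X. if r x y then h x / k x * W y else 0)"
    by (rule sum.swap)
  also have "\<dots> = (\<Sum>y\<in>X. \<Sum>x\<in>X. if r y x then h y / k y * W y else 0)"
  proof (rule sum.cong[OF refl], rule sum.cong[OF refl])
    fix y x assume "y \<in> X" "x \<in> X"
    then show "(if r x y then h x / k x * W y else 0) = (if r y x then h y / k y * W y else 0)"
      using r_sym[of x y] r_sym[of y x] h[of x y] k_eq[of x y] by auto
  qed
  also have "\<dots> = (\<Sum>y\<in>X. h y * W y)"
  proof (rule sum.cong[OF refl])
    fix y assume y: "y \<in> X"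
    have "(\<Sum>x\<in>X. if r y x then h y / k y * W y else 0) = k y * (h y / k y * W y)"
      unfolding k_def by (simp add: sum.inter_filter[OF X, symmetric])
    then show "(\<Sum>x\<in>X. if r y x then h y / k y * W y else 0) = h y * W y"
      using k[OF y] by simp
  qed
  finally show ?thesis unfolding k_def by simp
qed

(* The form is the positive combination \<Sum>x (c x / |[x]|) (\<Sum>y\<in>[x]. W y)\<^sup>2 of squared class sums. *)

lemma equiv_class_sums_zero_of_form_zero:
  fixes c W :: "'x \<Rightarrow> 'r::linordered_field"
  assumes X: "finite X" and r_refl: "\<And>x. x \<in> X \<Longrightarrow> r x x"
    and r_sym: "\<And>x y. x \<in> X \<Longrightarrow> y \<in> X \<Longrightarrow> r x y \<Longrightarrow> r y x"
    and r_trans: "\<And>x y z. x \<in> X \<Longrightarrow> y \<in> X \<Longrightarrow> z \<in> X \<Longrightarrow> r x y \<Longrightarrow> r y z \<Longrightarrow> r x z"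
    and c: "\<And>x y. x \<in> X \<Longrightarrow> y \<in> X \<Longrightarrow> r x y \<Longrightarrow> c x = c y"
    and c_pos: "\<And>x. x \<in> X \<Longrightarrow> c x > 0"
    and zero: "(\<Sum>x\<in>X. \<Sum>y\<in>X. if r x y then c x * W x * W y else 0) = 0"
    and x: "x \<in> X"
  shows "(\<Sum>y\<in>{y \<in> X. r x y}. W y) = 0"
proof -
  define T where "T x = (\<Sum>y\<in>{y \<in> X. r x y}. W y)" for x
  define q where "q x = c x / of_nat (card {y \<in> X. r x y})" for x
  have T_eq: "T x = T y" if "x \<in> X" "y \<in> X" "r x y" for x y
  proof -
    have "{z \<in> X. r x z} = {z \<in> X. r y z}" using that r_sym r_trans by blast
    then show ?thesis unfolding T_def by simp
  qed
  have cT: "c x * T x = c y * T y" if "x \<in> X" "y \<in> X" "r x y" for x y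
    using c[OF that] T_eq[OF that] by simp
  have q_pos: "q x > 0" if "x \<in> X" for x
  proof -
    have "card {y \<in> X. r x y} > 0" using X r_refl[OF that] that by (auto simp: card_gt_0_iff)
    then show ?thesis using c_pos[OF that] unfolding q_def by simp
  qed
  have "(\<Sum>x\<in>X. \<Sum>y\<in>X. if r x y then c x * W x * W y else 0) = (\<Sum>x\<in>X. (c x * T x) * W x)"
    unfolding T_def by (simp add: sum_distrib_left sum_distrib_right sum.inter_filter[OF X, symmetric] mult_ac)
  also have "\<dots> = (\<Sum>x\<in>X. c x * T x / of_nat (card {y \<in> X. r x y}) * T x)"
    unfolding T_def
    by (rule sum_class_invariant_eq_sum_class_sums[OF X r_refl r_sym r_trans cT[unfolded T_def]])
  also have "\<dots> = (\<Sum>x\<in>X. q x * (T x)\<^sup>2)"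
    unfolding q_def by (simp add: power2_eq_square mult.assoc)
  finally have "(\<Sum>x\<in>X. q x * (T x)\<^sup>2) = 0" using zero by simp
  moreover have "0 \<le> q y * (T y)\<^sup>2" if "y \<in> X" for y
    using q_pos[OF that] by simp
  ultimately have "q x * (T x)\<^sup>2 = 0"
    using sum_nonneg_eq_0_iff[OF X, where f = "\<lambda>y. q y * (T y)\<^sup>2"] x by blast
  then show ?thesis using q_pos[OF x] unfolding T_def by simp
qed

lemma (in group) cyclic_subgroup_iff_generate:
  assumes "subgroup P G"
  shows "cyclic_group (G\<lparr>carrier := P\<rparr>) \<longleftrightarrow> (\<exists>x\<in>P. P = generate G {x})"
proof -
  interpret P: group "G\<lparr>carrier := P\<rparr>" using subgroup.subgroup_is_group[OF assms is_group] .
  have range_eq: "range (\<lambda>n::int. x [^]\<^bsub>G\<lparr>carrier := P\<rparr>\<^esub> n) = generate G {x}" if "x \<in> P" for x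
  proof -
    have "range (\<lambda>n::int. x [^]\<^bsub>G\<lparr>carrier := P\<rparr>\<^esub> n) = range (\<lambda>n::int. x [^] n)"
      by (intro arg_cong[where f = range] ext) (rule int_pow_consistent[OF assms that, symmetric])
    also have "\<dots> = generate G {x}"
      by (simp add: generate_pow[OF subgroup.mem_carrier[OF assms that]] full_SetCompr_eq)
    finally show ?thesis .
  qed
  have "cyclic_group (G\<lparr>carrier := P\<rparr>) \<longleftrightarrow> (\<exists>x\<in>P. P = range (\<lambda>n::int. x [^]\<^bsub>G\<lparr>carrier := P\<rparr>\<^esub> n))"
    using P.cyclic_group by simp
  also have "\<dots> \<longleftrightarrow> (\<exists>x\<in>P. P = generate G {x})"
    by (intro bex_cong refl) (metis range_eq)
  finally show ?thesis .
qed

lemma (in group) subgroup_card_prime_power: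
  assumes "prime p" "card (carrier G) = p ^ n" "subgroup H G"
  shows "\<exists>k. card H = p ^ k"
proof -
  have "card (rcosets H) * card H = card (carrier G)"
    using lagrange[OF assms(3)] by (simp add: Coset.order_def)
  then have "card H dvd card (carrier G)" by (metis dvd_triv_right)
  then show ?thesis using divides_primepow_nat[OF assms(1)] assms(2) by auto
qed

locale fusion_system_on = group S for S :: "('a, 'b) monoid_scheme" +
  fixes F :: "'a set \<Rightarrow> ('a \<Rightarrow> 'a) \<Rightarrow> bool"
  assumes fusion_system: "fusion_system S F"
begin

lemmas fusion_system_axioms = fusion_system[unfolded fusion_system_def]

lemma F_subgroup: "F P \<phi> \<Longrightarrow> subgroup P S"
  and F_hom: "F P \<phi> \<Longrightarrow> \<phi> \<in> hom (S\<lparr>carrier := P\<rparr>) S"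
  and F_inj: "F P \<phi> \<Longrightarrow> inj_on \<phi> P"
  using fusion_system_axioms[THEN conjunct1] by blast+

lemma F_cong: "F P \<phi> \<Longrightarrow> (\<And>x. x \<in> P \<Longrightarrow> \<psi> x = \<phi> x) \<Longrightarrow> F P \<psi>"
  using fusion_system_axioms[THEN conjunct2, THEN conjunct1] by blast

lemma F_conj: "subgroup P S \<Longrightarrow> g \<in> carrier S \<Longrightarrow> F P (fs_conj S g)"
  using fusion_system_axioms[THEN conjunct2, THEN conjunct2, THEN conjunct1] by blast

lemma F_restrict: "F P \<phi> \<Longrightarrow> subgroup Q S \<Longrightarrow> Q \<subseteq> P \<Longrightarrow> F Q \<phi>"
  using fusion_system_axioms[THEN conjunct2, THEN conjunct2, THEN conjunct2, THEN conjunct1] by blast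

lemma F_comp: "F P \<phi> \<Longrightarrow> F (\<phi> ` P) \<psi> \<Longrightarrow> F P (\<psi> \<circ> \<phi>)"
  using fusion_system_axioms[THEN conjunct2, THEN conjunct2, THEN conjunct2, THEN conjunct2,
      THEN conjunct1] by blast

lemma F_inv: "F P \<phi> \<Longrightarrow> F (\<phi> ` P) (inv_into P \<phi>)"
  using fusion_system_axioms[THEN conjunct2, THEN conjunct2, THEN conjunct2, THEN conjunct2,
      THEN conjunct2] by blast

lemma F_id: assumes "subgroup P S" shows "F P (\<lambda>x. x)"
proof (rule F_cong[OF F_conj[OF assms one_closed]])
  fix x assume "x \<in> P"
  then show "x = fs_conj S \<one>\<^bsub>S\<^esub> x"
    using subgroup.mem_carrier[OF assms] by (simp add: fs_conj_def)
qed

lemma F_group_hom: "F P \<phi> \<Longrightarrow> group_hom (S\<lparr>carrier := P\<rparr>) S \<phi>"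
  unfolding group_hom_def group_hom_axioms_def
  using F_hom F_subgroup subgroup.subgroup_is_group is_group by blast

lemma F_mem: "F P \<phi> \<Longrightarrow> x \<in> P \<Longrightarrow> \<phi> x \<in> carrier S"
  using F_hom by (auto simp: hom_def)

lemma F_image_generate:
  assumes "F P \<phi>" "x \<in> P"
  shows "\<phi> ` generate S {x} = generate S {\<phi> x}"
proof -
  interpret h: group_hom "S\<lparr>carrier := P\<rparr>" S \<phi> by (rule F_group_hom[OF assms(1)])
  have "generate (S\<lparr>carrier := P\<rparr>) {x} = generate S {x}"
    using generate_consistent[of "{x}" P] assms(2) F_subgroup[OF assms(1)] by simp
  moreover have "generate S (\<phi> ` {x}) = \<phi> ` generate (S\<lparr>carrier := P\<rparr>) {x}"
    by (rule h.generate_img) (simp add: assms(2))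
  ultimately show ?thesis by simp
qed

lemma F_restrict_generate: assumes "F P \<phi>" "x \<in> P" shows "F (generate S {x}) \<phi>"
proof (rule F_restrict[OF assms(1)])
  have "x \<in> carrier S" using subgroup.mem_carrier[OF F_subgroup[OF assms(1)] assms(2)] .
  then show "subgroup (generate S {x}) S" by (simp add: generate_is_subgroup)
  show "generate S {x} \<subseteq> P"
    using generate_subgroup_incl[OF _ F_subgroup[OF assms(1)]] assms(2) by simp
qed

lemma generate_self: "x \<in> generate S {x}"
  by (rule generate.incl) simp

lemma fconj_refl: "subgroup P S \<Longrightarrow> fconj S F P P"
  unfolding fconj_def using F_id by (intro exI[of _ "\<lambda>x. x"]) simp

lemma fconj_sym: assumes "fconj S F P Q" shows "fconj S F Q P"
proof -
  obtain \<phi> where \<phi>: "F P \<phi>" "\<phi> ` P = Q" using assms unfolding fconj_def by auto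
  have "F Q (inv_into P \<phi>)" using F_inv[OF \<phi>(1)] \<phi>(2) by simp
  moreover have "inv_into P \<phi> ` Q = P" using \<phi> F_inj inv_into_image_cancel[of \<phi> P P] by auto
  ultimately show ?thesis unfolding fconj_def by auto
qed

lemma fconj_trans: assumes "fconj S F P Q" "fconj S F Q R" shows "fconj S F P R"
proof -
  obtain \<phi> where \<phi>: "F P \<phi>" "\<phi> ` P = Q" using assms unfolding fconj_def by auto
  obtain \<psi> where \<psi>: "F Q \<psi>" "\<psi> ` Q = R" using assms unfolding fconj_def by auto
  have "F P (\<psi> \<circ> \<phi>)" using F_comp[OF \<phi>(1)] \<psi>(1) \<phi>(2) by simp
  then show ?thesis unfolding fconj_def using \<phi>(2) \<psi>(2) image_comp by metis
qed

lemma fconj_card: "fconj S F P Q \<Longrightarrow> card P = card Q"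
  unfolding fconj_def using F_inj card_image by metis

lemma fconj_class_eq_iff:
  assumes "subgroup P S"
  shows "{R. fconj S F P R} = {R. fconj S F Q R} \<longleftrightarrow> fconj S F P Q"
  using fconj_refl[OF assms] fconj_sym fconj_trans by blast

definition fused :: "'a \<Rightarrow> 'a \<Rightarrow> bool" where
  "fused x y \<longleftrightarrow> (\<exists>P \<phi>. F P \<phi> \<and> x \<in> P \<and> \<phi> x = y)"

lemma fused_carrier: "fused x y \<Longrightarrow> x \<in> carrier S \<and> y \<in> carrier S"
  unfolding fused_def using F_mem F_subgroup subgroup.mem_carrier by metis

lemma fused_refl: "x \<in> carrier S \<Longrightarrow> fused x x"
  unfolding fused_def using F_id[OF subgroup_self] by blast

lemma fused_sym: assumes "fused x y" shows "fused y x"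
proof -
  obtain P \<phi> where \<phi>: "F P \<phi>" "x \<in> P" "\<phi> x = y" using assms unfolding fused_def by blast
  then have "y \<in> \<phi> ` P" "inv_into P \<phi> y = x" using F_inj by auto
  then show ?thesis unfolding fused_def using F_inv[OF \<phi>(1)] by blast
qed

lemma fconj_generate_iff:
  assumes "x \<in> carrier S"
  shows "fconj S F (generate S {x}) Q \<longleftrightarrow> (\<exists>y. fused x y \<and> Q = generate S {y})"
proof
  assume "fconj S F (generate S {x}) Q"
  then obtain \<phi> where \<phi>: "F (generate S {x}) \<phi>" "\<phi> ` generate S {x} = Q"
    unfolding fconj_def by auto
  then have "fused x (\<phi> x)" unfolding fused_def using generate_self by blast
  moreover have "Q = generate S {\<phi> x}" using F_image_generate[OF \<phi>(1) generate_self] \<phi>(2) by simp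
  ultimately show "\<exists>y. fused x y \<and> Q = generate S {y}" by blast
next
  assume "\<exists>y. fused x y \<and> Q = generate S {y}"
  then obtain y P \<phi> where "F P \<phi>" "x \<in> P" "\<phi> x = y" "Q = generate S {y}"
    unfolding fused_def by blast
  then show "fconj S F (generate S {x}) Q"
    unfolding fconj_def using F_restrict_generate F_image_generate by metis
qed

lemma fused_trans: assumes "fused x y" "fused y z" shows "fused x z"
proof -
  obtain P \<phi> where \<phi>: "F P \<phi>" "x \<in> P" "\<phi> x = y" using assms(1) unfolding fused_def by blast
  obtain Q \<psi> where \<psi>: "F Q \<psi>" "y \<in> Q" "\<psi> y = z" using assms(2) unfolding fused_def by blast
  have "F (generate S {x}) \<phi>" "\<phi> ` generate S {x} = generate S {y}"
    using F_restrict_generate[OF \<phi>(1,2)] F_image_generate[OF \<phi>(1,2)] \<phi>(3) by simp_all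
  moreover have "F (generate S {y}) \<psi>" using F_restrict_generate[OF \<psi>(1,2)] .
  ultimately have "F (generate S {x}) (\<psi> \<circ> \<phi>)" using F_comp by metis
  then show ?thesis unfolding fused_def using generate_self \<phi>(3) \<psi>(3) by fastforce
qed

lemma fconj_of_fused_mem:
  assumes g: "g \<in> carrier S" and fused: "fused g y"
    and Q: "subgroup Q S" "finite Q" "y \<in> Q" and le: "card Q \<le> card (generate S {g})"
  shows "fconj S F (generate S {g}) Q"
proof -
  have conj: "fconj S F (generate S {g}) (generate S {y})"
    using fconj_generate_iff[OF g] fused by blast
  have sub: "generate S {y} \<subseteq> Q" using generate_subgroup_incl[of "{y}" Q] Q by simp
  have "generate S {y} = Q"
    using card_subset_eq[OF Q(2) sub] card_mono[OF Q(2) sub] fconj_card[OF conj] le by simp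
  then show ?thesis using conj by simp
qed

definition cyclic_class :: "'a \<Rightarrow> 'a set set" where
  "cyclic_class x = {Q. fconj S F (generate S {x}) Q}"

definition cyclic_classes :: "'a set set set" where
  "cyclic_classes = cyclic_class ` carrier S"

lemma cyclic_classes_eq:
  "{C. \<exists>P. subgroup P S \<and> cyclic_group (S\<lparr>carrier := P\<rparr>) \<and> C = {Q. fconj S F P Q}}
    = cyclic_classes"
proof (intro equalityI subsetI)
  fix C assume "C \<in> {C. \<exists>P. subgroup P S \<and> cyclic_group (S\<lparr>carrier := P\<rparr>) \<and> C = {Q. fconj S F P Q}}"
  then obtain P where P: "subgroup P S" "cyclic_group (S\<lparr>carrier := P\<rparr>)" and C: "C = {Q. fconj S F P Q}"
    by blast
  obtain x where x: "x \<in> P" "P = generate S {x}" using cyclic_subgroup_iff_generate[OF P(1)] P(2) by blast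
  have "x \<in> carrier S" using subgroup.mem_carrier[OF P(1) x(1)] .
  moreover have "C = cyclic_class x" unfolding cyclic_class_def using C x(2) by simp
  ultimately show "C \<in> cyclic_classes" unfolding cyclic_classes_def by blast
next
  fix C assume "C \<in> cyclic_classes"
  then obtain x where x: "x \<in> carrier S" "C = {Q. fconj S F (generate S {x}) Q}"
    unfolding cyclic_classes_def cyclic_class_def by blast
  have gen: "subgroup (generate S {x}) S" using x(1) by (simp add: generate_is_subgroup)
  moreover have "cyclic_group (S\<lparr>carrier := generate S {x}\<rparr>)"
    using cyclic_subgroup_iff_generate[OF gen] generate_self by blast
  ultimately show "C \<in> {C. \<exists>P. subgroup P S \<and> cyclic_group (S\<lparr>carrier := P\<rparr>) \<and> C = {Q. fconj S F P Q}}"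
    using x(2) by blast
qed

end

locale biset_action = group S for S :: "('a, 'b) monoid_scheme" +
  fixes \<Omega> :: "'c set" and L :: "'a \<Rightarrow> 'c \<Rightarrow> 'c" and R :: "'c \<Rightarrow> 'a \<Rightarrow> 'c"
  assumes biset: "biset S \<Omega> L R"
begin

abbreviation act :: "'a \<times> 'a \<Rightarrow> 'c \<Rightarrow> 'c" where "act \<equiv> bact S L R"

abbreviation orbit_count :: "'a set \<Rightarrow> 'a set \<Rightarrow> nat" where
  "orbit_count \<equiv> biset_orbit_count S \<Omega> L R"

lemma finite_biset: "finite \<Omega>"
  using biset unfolding biset_def by blast

lemma act_closed: "s \<in> carrier S \<Longrightarrow> t \<in> carrier S \<Longrightarrow> x \<in> \<Omega> \<Longrightarrow> act (s, t) x \<in> \<Omega>"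
  using biset unfolding biset_def bact_def by simp

lemma act_one: "x \<in> \<Omega> \<Longrightarrow> act (\<one>\<^bsub>S\<^esub>, \<one>\<^bsub>S\<^esub>) x = x"
  using biset unfolding biset_def bact_def by simp

lemma act_mult:
  assumes "s \<in> carrier S" "t \<in> carrier S" "s' \<in> carrier S" "t' \<in> carrier S" "x \<in> \<Omega>"
  shows "act (s \<otimes>\<^bsub>S\<^esub> s', t \<otimes>\<^bsub>S\<^esub> t') x = act (s, t) (act (s', t') x)"
proof -
  have "act (s \<otimes>\<^bsub>S\<^esub> s', t \<otimes>\<^bsub>S\<^esub> t') x = L (s \<otimes>\<^bsub>S\<^esub> s') (R x (inv\<^bsub>S\<^esub> t' \<otimes>\<^bsub>S\<^esub> inv\<^bsub>S\<^esub> t))"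
    unfolding bact_def using assms by (simp add: inv_mult_group)
  also have "\<dots> = L s (R (L s' (R x (inv\<^bsub>S\<^esub> t'))) (inv\<^bsub>S\<^esub> t))"
    using assms biset unfolding biset_def by simp
  finally show ?thesis unfolding bact_def by simp
qed

lemma act_inv:
  "s \<in> carrier S \<Longrightarrow> t \<in> carrier S \<Longrightarrow> x \<in> \<Omega> \<Longrightarrow> act (inv\<^bsub>S\<^esub> s, inv\<^bsub>S\<^esub> t) (act (s, t) x) = x"
  using act_mult[of "inv\<^bsub>S\<^esub> s" "inv\<^bsub>S\<^esub> t" s t x] act_one by simp

definition act_perm :: "'a \<times> 'a \<Rightarrow> 'c \<Rightarrow> 'c" where
  "act_perm g = (\<lambda>x\<in>\<Omega>. act g x)"

lemma act_perm_Bij: assumes "s \<in> carrier S" "t \<in> carrier S" shows "act_perm (s, t) \<in> Bij \<Omega>"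
proof -
  have "bij_betw (act (s, t)) \<Omega> \<Omega>"
    by (rule bij_betw_byWitness[where f' = "act (inv\<^bsub>S\<^esub> s, inv\<^bsub>S\<^esub> t)"])
      (use assms act_inv[of s t] act_inv[of "inv\<^bsub>S\<^esub> s" "inv\<^bsub>S\<^esub> t"] act_closed in auto)
  moreover have "bij_betw (act_perm (s, t)) \<Omega> \<Omega> = bij_betw (act (s, t)) \<Omega> \<Omega>"
    by (rule bij_betw_cong) (simp add: act_perm_def)
  moreover have "act_perm (s, t) \<in> extensional \<Omega>" unfolding act_perm_def by simp
  ultimately show ?thesis unfolding Bij_def by simp
qed

lemma act_perm_mult:
  assumes "s \<in> carrier S" "t \<in> carrier S" "s' \<in> carrier S" "t' \<in> carrier S"
  shows "act_perm (s \<otimes>\<^bsub>S\<^esub> s', t \<otimes>\<^bsub>S\<^esub> t') = compose \<Omega> (act_perm (s, t)) (act_perm (s', t'))"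
  by (rule ext) (simp add: act_perm_def compose_def act_mult[OF assms] act_closed[OF assms(3,4)])

lemma group_action_subgroup:
  assumes T: "subgroup T (S \<times>\<times> S)"
  shows "group_action ((S \<times>\<times> S)\<lparr>carrier := T\<rparr>) \<Omega> act_perm"
proof -
  have T_carrier: "T \<subseteq> carrier S \<times> carrier S" using subgroup.subset[OF T] by simp
  have "act_perm \<in> hom ((S \<times>\<times> S)\<lparr>carrier := T\<rparr>) (BijGroup \<Omega>)"
  proof (rule homI)
    fix g assume "g \<in> carrier ((S \<times>\<times> S)\<lparr>carrier := T\<rparr>)"
    then show "act_perm g \<in> carrier (BijGroup \<Omega>)"
      using T_carrier act_perm_Bij unfolding BijGroup_def by (cases g) auto
  next
    fix g h assume gh: "g \<in> carrier ((S \<times>\<times> S)\<lparr>carrier := T\<rparr>)" "h \<in> carrier ((S \<times>\<times> S)\<lparr>carrier := T\<rparr>)"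
    obtain s t s' t' where st: "g = (s, t)" "h = (s', t')"
      and carrier: "s \<in> carrier S" "t \<in> carrier S" "s' \<in> carrier S" "t' \<in> carrier S"
      using gh T_carrier by (cases g, cases h) auto
    show "act_perm (g \<otimes>\<^bsub>(S \<times>\<times> S)\<lparr>carrier := T\<rparr>\<^esub> h) = act_perm g \<otimes>\<^bsub>BijGroup \<Omega>\<^esub> act_perm h"
      using act_perm_mult[OF carrier] act_perm_Bij[OF carrier(1,2)] act_perm_Bij[OF carrier(3,4)]
      unfolding st BijGroup_def by simp
  qed
  moreover have "group ((S \<times>\<times> S)\<lparr>carrier := T\<rparr>)"
    using subgroup.subgroup_is_group[OF T DirProd_group[OF is_group is_group]] .
  ultimately show ?thesis
    unfolding group_action_def group_hom_def group_hom_axioms_def using group_BijGroup by simp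
qed

definition fix_count :: "'a \<Rightarrow> 'a \<Rightarrow> nat" where
  "fix_count x y = card {w \<in> \<Omega>. act (x, y) w = w}"

lemma orbit_count_burnside:
  assumes P: "subgroup P S" "finite P" and Q: "subgroup Q S" "finite Q"
  shows "orbit_count P Q * (card P * card Q) = (\<Sum>u\<in>P. \<Sum>v\<in>Q. fix_count u v)"
proof -
  let ?T = "(S \<times>\<times> S)\<lparr>carrier := P \<times> Q\<rparr>"
  interpret T: group_action ?T \<Omega> act_perm
    by (rule group_action_subgroup[OF DirProd_subgroups[OF is_group P(1) is_group Q(1)]])
  have "card (orbits ?T \<Omega> act_perm) * Coset.order ?T = (\<Sum>g\<in>P \<times> Q. card (invariants \<Omega> act_perm g))"
    using T.burnside finite_cartesian_product[OF P(2) Q(2)] finite_biset by simp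
  moreover have "orbits ?T \<Omega> act_perm = (\<lambda>x. {act (u, v) x | u v. u \<in> P \<and> v \<in> Q}) ` \<Omega>"
    unfolding orbits_def orbit_def act_perm_def by auto
  moreover have "Coset.order ?T = card P * card Q" by (simp add: Coset.order_def card_cartesian_product)
  moreover have "(\<Sum>g\<in>P \<times> Q. card (invariants \<Omega> act_perm g)) = (\<Sum>g\<in>P \<times> Q. fix_count (fst g) (snd g))"
    unfolding invariants_def fix_count_def act_perm_def by (auto intro!: sum.cong arg_cong[where f = card])
  moreover have "(\<Sum>g\<in>P \<times> Q. fix_count (fst g) (snd g)) = (\<Sum>u\<in>P. \<Sum>v\<in>Q. fix_count u v)"
    by (simp add: sum.cartesian_product case_prod_beta)
  ultimately show ?thesis unfolding biset_orbit_count_def by simp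
qed

lemma subgroup_stabilizer_projection:
  assumes P: "subgroup P S" and Q: "subgroup Q S" and w: "w \<in> \<Omega>"
  shows "subgroup {u \<in> P. \<exists>v\<in>Q. act (u, v) w = w} S"
proof (rule subgroupI)
  have PQ: "P \<subseteq> carrier S" "Q \<subseteq> carrier S" using P Q subgroup.subset by auto
  show "{u \<in> P. \<exists>v\<in>Q. act (u, v) w = w} \<subseteq> carrier S" using PQ by auto
  show "{u \<in> P. \<exists>v\<in>Q. act (u, v) w = w} \<noteq> {}"
    using act_one[OF w] subgroup.one_closed[OF P] subgroup.one_closed[OF Q] by auto
  fix a assume "a \<in> {u \<in> P. \<exists>v\<in>Q. act (u, v) w = w}"
  then obtain v where a: "a \<in> P" "v \<in> Q" "act (a, v) w = w" by auto
  then have "act (inv\<^bsub>S\<^esub> a, inv\<^bsub>S\<^esub> v) w = w" using act_inv[of a v w] PQ w by auto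
  then show "inv\<^bsub>S\<^esub> a \<in> {u \<in> P. \<exists>v\<in>Q. act (u, v) w = w}"
    using a subgroup.m_inv_closed[OF P] subgroup.m_inv_closed[OF Q] by auto
next
  fix a b assume "a \<in> {u \<in> P. \<exists>v\<in>Q. act (u, v) w = w}" "b \<in> {u \<in> P. \<exists>v\<in>Q. act (u, v) w = w}"
  then obtain v v' where a: "a \<in> P" "v \<in> Q" "act (a, v) w = w"
    and b: "b \<in> P" "v' \<in> Q" "act (b, v') w = w" by auto
  then have "act (a \<otimes>\<^bsub>S\<^esub> b, v \<otimes>\<^bsub>S\<^esub> v') w = w"
    using act_mult[of a v b v' w] w subgroup.mem_carrier[OF P] subgroup.mem_carrier[OF Q] by simp
  then show "a \<otimes>\<^bsub>S\<^esub> b \<in> {u \<in> P. \<exists>v\<in>Q. act (u, v) w = w}"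
    using a b subgroup.m_closed[OF P] subgroup.m_closed[OF Q] by auto
qed

definition fixed_by_some :: "'a set \<Rightarrow> 'a \<Rightarrow> 'c set" where
  "fixed_by_some Q x = {w \<in> \<Omega>. \<exists>y\<in>Q. act (x, y) w = w}"

lemma fixed_by_some_generate_eq:
  assumes Q: "subgroup Q S" and x: "x \<in> carrier S" "x' \<in> carrier S"
    and eq: "generate S {x} = generate S {x'}"
  shows "fixed_by_some Q x = fixed_by_some Q x'"
proof -
  have iff: "x \<in> A \<longleftrightarrow> x' \<in> A" if "subgroup A S" for A
    using generate_subgroup_incl[OF _ that] generate.incl[of _ "{x}" S] generate.incl[of _ "{x'}" S]
      eq by auto
  have "(\<exists>y\<in>Q. act (x, y) w = w) \<longleftrightarrow> (\<exists>y\<in>Q. act (x', y) w = w)" if w: "w \<in> \<Omega>" for w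
    using iff[OF subgroup_stabilizer_projection[OF subgroup_self Q w]] x by simp
  then show ?thesis unfolding fixed_by_some_def by blast
qed

end

locale characteristic_biset_on = fusion_system_on S F + biset_action S \<Omega> L R
  for S :: "('a, 'b) monoid_scheme" and F \<Omega> L R +
  fixes p :: nat
  assumes prime_p: "prime p" and finite_S: "finite (carrier S)"
    and p_group: "\<exists>n. card (carrier S) = p ^ n"
    and characteristic: "characteristic_biset p S F \<Omega> L R"
begin

lemma finite_subgroup: "subgroup P S \<Longrightarrow> finite P"
  using finite_S subgroup.subset rev_finite_subset by metis

lemma card_subgroup_pos: "subgroup P S \<Longrightarrow> card P > 0"
  using finite_subgroup subgroup.one_closed by (metis card_gt_0_iff empty_iff)

lemma stabilizer_is_graph:
  assumes "w \<in> \<Omega>"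
  shows "\<exists>P \<phi>. F P \<phi> \<and> {st \<in> carrier S \<times> carrier S. act st w = w} = {(u, \<phi> u) | u. u \<in> P}"
proof -
  have "biset_generated S F \<Omega> L R" using characteristic unfolding characteristic_biset_def by blast
  then show ?thesis using assms unfolding biset_generated_def by blast
qed

lemma fixing_pair_graph:
  assumes "w \<in> \<Omega>" "x \<in> carrier S" "y \<in> carrier S" "act (x, y) w = w"
  obtains P \<phi> where "F P \<phi>" "x \<in> P" "y = \<phi> x"
    and "\<And>y'. y' \<in> carrier S \<Longrightarrow> act (x, y') w = w \<Longrightarrow> y' = \<phi> x"
proof -
  obtain P \<phi> where \<phi>: "F P \<phi>" and graph: "{st \<in> carrier S \<times> carrier S. act st w = w} = {(u, \<phi> u) | u. u \<in> P}"
    using stabilizer_is_graph[OF assms(1)] by blast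
  have on_graph: "x \<in> P \<and> y' = \<phi> x" if "y' \<in> carrier S" "act (x, y') w = w" for y'
  proof -
    have "(x, y') \<in> {(u, \<phi> u) | u. u \<in> P}"
      unfolding graph[symmetric] using assms(2) that by simp
    then show ?thesis by auto
  qed
  show ?thesis
  proof (rule that[OF \<phi>])
    show "x \<in> P" "y = \<phi> x" using on_graph[OF assms(3,4)] by simp_all
    show "\<And>y'. y' \<in> carrier S \<Longrightarrow> act (x, y') w = w \<Longrightarrow> y' = \<phi> x" using on_graph by simp
  qed
qed

lemma fixing_pair_unique:
  assumes "w \<in> \<Omega>" "x \<in> carrier S" "y \<in> carrier S" "y' \<in> carrier S"
    and "act (x, y) w = w" "act (x, y') w = w"
  shows "y = y'"
proof -
  obtain P \<phi> where "F P \<phi>" "x \<in> P" "y = \<phi> x"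
    and unique: "\<And>y'. y' \<in> carrier S \<Longrightarrow> act (x, y') w = w \<Longrightarrow> y' = \<phi> x"
    using fixing_pair_graph[OF assms(1,2,3,5)] by blast
  then show ?thesis using unique[OF assms(4,6)] by simp
qed

lemma fixing_pair_fused:
  assumes "w \<in> \<Omega>" "x \<in> carrier S" "y \<in> carrier S" "act (x, y) w = w"
  shows "fused x y"
proof -
  obtain P \<phi> where "F P \<phi>" "x \<in> P" "y = \<phi> x"
    and "\<And>y'. y' \<in> carrier S \<Longrightarrow> act (x, y') w = w \<Longrightarrow> y' = \<phi> x"
    using fixing_pair_graph[OF assms] by blast
  then show ?thesis unfolding fused_def by blast
qed

lemma stable_transport:
  assumes "F P \<phi>" "F Q \<psi>"
  obtains f where "bij_betw f \<Omega> \<Omega>"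
    and "\<And>u v w. u \<in> P \<Longrightarrow> v \<in> Q \<Longrightarrow> w \<in> \<Omega> \<Longrightarrow> act (u, v) w = w \<Longrightarrow> act (\<phi> u, \<psi> v) (f w) = f w"
proof -
  have stable: "biset_stable S F \<Omega> L R"
    using characteristic unfolding characteristic_biset_def by blast
  have "subgroup (P \<times> Q) (S \<times>\<times> S)"
    using DirProd_subgroups[OF is_group F_subgroup[OF assms(1)] is_group F_subgroup[OF assms(2)]] .
  then have "\<exists>f. bij_betw f \<Omega> \<Omega> \<and>
      (\<forall>u v w. (u, v) \<in> P \<times> Q \<and> w \<in> \<Omega> \<longrightarrow> f (act (u, v) w) = act (\<phi> u, \<psi> v) (f w))"
    using stable[unfolded biset_stable_def, rule_format, of P \<phi> Q \<psi> "P \<times> Q"] assms by simp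
  then obtain f where f: "bij_betw f \<Omega> \<Omega>"
    and equivariant: "\<And>u v w. (u, v) \<in> P \<times> Q \<Longrightarrow> w \<in> \<Omega> \<Longrightarrow> f (act (u, v) w) = act (\<phi> u, \<psi> v) (f w)"
    by blast
  show ?thesis
  proof (rule that[OF f])
    fix u v w assume "u \<in> P" "v \<in> Q" "w \<in> \<Omega>" "act (u, v) w = w"
    then show "act (\<phi> u, \<psi> v) (f w) = f w" using equivariant[of u v w] by simp
  qed
qed

lemma fix_count_le_transport:
  assumes "F P \<phi>" "F Q \<psi>" "u \<in> P" "v \<in> Q"
  shows "fix_count u v \<le> fix_count (\<phi> u) (\<psi> v)"
proof -
  obtain f where f: "bij_betw f \<Omega> \<Omega>"
    and fixed: "\<And>u v w. u \<in> P \<Longrightarrow> v \<in> Q \<Longrightarrow> w \<in> \<Omega> \<Longrightarrow> act (u, v) w = w \<Longrightarrow> act (\<phi> u, \<psi> v) (f w) = f w"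
    using stable_transport[OF assms(1,2)] by blast
  have "inj_on f {w \<in> \<Omega>. act (u, v) w = w}"
    using f unfolding bij_betw_def by (auto intro: inj_on_subset)
  moreover have "f ` {w \<in> \<Omega>. act (u, v) w = w} \<subseteq> {w \<in> \<Omega>. act (\<phi> u, \<psi> v) w = w}"
    using fixed[OF assms(3,4)] f bij_betwE by fastforce
  ultimately show ?thesis
    unfolding fix_count_def using card_inj_on_le finite_biset by fastforce
qed

lemma fix_count_fused:
  assumes "fused x y"
  shows "fix_count x y = fix_count x x" and "fix_count y y = fix_count x x"
proof -
  obtain P \<phi> where \<phi>: "F P \<phi>" "x \<in> P" "\<phi> x = y" using assms unfolding fused_def by blast
  have xy: "x \<in> carrier S" "y \<in> carrier S" using fused_carrier assms by auto
  have \<phi>': "F (\<phi> ` P) (inv_into P \<phi>)" "y \<in> \<phi> ` P" "inv_into P \<phi> y = x"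
    using F_inv \<phi> F_inj by auto
  have id: "F (carrier S) (\<lambda>x. x)" by (rule F_id[OF subgroup_self])
  have "fix_count x x \<le> fix_count x y" "fix_count x y \<le> fix_count x x"
    "fix_count x y \<le> fix_count y y" "fix_count y y \<le> fix_count x y"
    using fix_count_le_transport[OF id \<phi>(1) xy(1) \<phi>(2)] fix_count_le_transport[OF id \<phi>'(1) xy(1) \<phi>'(2)]
      fix_count_le_transport[OF \<phi>(1) id \<phi>(2) xy(2)] fix_count_le_transport[OF \<phi>'(1) id \<phi>'(2) xy(2)]
      \<phi>(3) \<phi>'(3) by simp_all
  then show "fix_count x y = fix_count x x" "fix_count y y = fix_count x x" by linarith+
qed

lemma fix_count_unless_fused:
  assumes "x \<in> carrier S" "y \<in> carrier S"
  shows "fix_count x y = (if fused x y then fix_count x x else 0)"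
proof (cases "fused x y")
  case True
  then show ?thesis using fix_count_fused(1)[OF True] by simp
next
  case False
  then have "{w \<in> \<Omega>. act (x, y) w = w} = {}" using fixing_pair_fused assms by blast
  then have "fix_count x y = 0" unfolding fix_count_def by (metis card.empty)
  then show ?thesis using False by simp
qed

(* By F-generation the first projection embeds the stabilizer of w in <x> \<times> S into <x>;
   as no (x, y) fixes w, its image is a proper subgroup of the p-group <x>. *)

lemma p_mult_card_dvd_card_orbit:
  assumes x: "x \<in> carrier S" and w: "w \<in> \<Omega>" and unfixed: "\<forall>y\<in>carrier S. act (x, y) w \<noteq> w"
  shows "p * card (carrier S) dvd card (orbit ((S \<times>\<times> S)\<lparr>carrier := generate S {x} \<times> carrier S\<rparr>) act_perm w)"
proof -
  let ?C = "generate S {x}"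
  let ?T = "(S \<times>\<times> S)\<lparr>carrier := ?C \<times> carrier S\<rparr>"
  define H where "H = {u \<in> ?C. \<exists>v\<in>carrier S. act (u, v) w = w}"
  have C: "subgroup ?C S" using x by (simp add: generate_is_subgroup)
  interpret T: group_action ?T \<Omega> act_perm
    by (rule group_action_subgroup[OF DirProd_subgroups[OF is_group C is_group subgroup_self]])
  have H: "subgroup H S"
    unfolding H_def by (rule subgroup_stabilizer_projection[OF C subgroup_self w])
  obtain n where n: "card (carrier S) = p ^ n" using p_group by blast
  obtain m where m: "card ?C = p ^ m" using subgroup_card_prime_power[OF prime_p n C] by blast
  obtain j where j: "card H = p ^ j" using subgroup_card_prime_power[OF prime_p n H] by blast
  have H_proper: "H \<subset> ?C" using unfixed generate_self x unfolding H_def by blast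
  have "p ^ j < p ^ m" using psubset_card_mono[OF finite_subgroup[OF C] H_proper] j m by simp
  then have jm: "j < m" using prime_gt_1_nat[OF prime_p] by simp
  have stab: "stabilizer ?T act_perm w = {g \<in> ?C \<times> carrier S. act g w = w}"
    unfolding stabilizer_def act_perm_def using w by simp
  have "inj_on fst (stabilizer ?T act_perm w)"
  proof (rule inj_onI)
    fix g g' assume g: "g \<in> stabilizer ?T act_perm w" and g': "g' \<in> stabilizer ?T act_perm w"
      and eq: "fst g = fst g'"
    obtain a b b' where ab: "g = (a, b)" "g' = (a, b')" using eq by (cases g, cases g') auto
    then have "a \<in> ?C" "b \<in> carrier S" "b' \<in> carrier S" "act (a, b) w = w" "act (a, b') w = w"
      using g g' unfolding stab by auto
    then have "b = b'" using fixing_pair_unique[OF w subgroup.mem_carrier[OF C]] by blast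
    then show "g = g'" using ab by simp
  qed
  moreover have "fst ` stabilizer ?T act_perm w = H" unfolding stab H_def by force
  ultimately have stab_card: "card (stabilizer ?T act_perm w) = p ^ j" using card_image j by metis
  have "card (orbit ?T act_perm w) * p ^ j = p ^ m * card (carrier S)"
    using T.orbit_stabilizer_theorem[OF w] stab_card m by (simp add: Coset.order_def card_cartesian_product)
  also have "p ^ m = p ^ (m - j) * p ^ j" using jm by (simp add: power_add[symmetric])
  finally have "card (orbit ?T act_perm w) = p ^ (m - j) * card (carrier S)"
    using prime_gt_1_nat[OF prime_p] by (simp add: ac_simps)
  moreover have "p dvd p ^ (m - j)" using jm by (simp add: dvd_power)
  ultimately show ?thesis by (simp add: mult_dvd_mono)
qed

lemma exists_fixing_pair:
  assumes x: "x \<in> carrier S"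
  shows "\<exists>w\<in>\<Omega>. \<exists>y\<in>carrier S. act (x, y) w = w"
proof (rule ccontr)
  assume unfixed: "\<not> ?thesis"
  let ?T = "(S \<times>\<times> S)\<lparr>carrier := generate S {x} \<times> carrier S\<rparr>"
  have C: "subgroup (generate S {x}) S" using x by (simp add: generate_is_subgroup)
  interpret T: group_action ?T \<Omega> act_perm
    by (rule group_action_subgroup[OF DirProd_subgroups[OF is_group C is_group subgroup_self]])
  have "card \<Omega> = (\<Sum>orb\<in>orbits ?T \<Omega> act_perm. card orb)"
    using T.disjoint_sum[OF finite_biset, of "\<lambda>_. 1::nat"] by simp
  also have "p * card (carrier S) dvd \<dots>"
    using p_mult_card_dvd_card_orbit[OF x] unfixed unfolding orbits_def by (auto intro!: dvd_sum)
  finally have "card (carrier S) * p dvd card \<Omega>" by (simp add: ac_simps)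
  moreover obtain k where "card \<Omega> = card (carrier S) * k" "\<not> p dvd k"
    using characteristic unfolding characteristic_biset_def by (auto simp: ac_simps)
  moreover have "card (carrier S) > 0" using finite_S one_closed by (auto simp: card_gt_0_iff)
  ultimately show False by simp
qed

lemma fix_count_diag_pos: assumes "x \<in> carrier S" shows "fix_count x x > 0"
proof -
  obtain w y where w: "w \<in> \<Omega>" "y \<in> carrier S" "act (x, y) w = w"
    using exists_fixing_pair[OF assms] by blast
  then have "fix_count x y > 0" unfolding fix_count_def using finite_biset by (auto simp: card_gt_0_iff)
  then show ?thesis using fix_count_fused(1)[OF fixing_pair_fused[OF w(1) assms w(2,3)]] by simp
qed

lemma sum_fix_count_row:
  assumes Q: "subgroup Q S" and x: "x \<in> carrier S"
  shows "(\<Sum>y\<in>Q. fix_count x y) = card (fixed_by_some Q x)"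
proof -
  have "fixed_by_some Q x = (\<Union>y\<in>Q. {w \<in> \<Omega>. act (x, y) w = w})"
    unfolding fixed_by_some_def by auto
  moreover have "card (\<Union>y\<in>Q. {w \<in> \<Omega>. act (x, y) w = w}) = (\<Sum>y\<in>Q. fix_count x y)"
    unfolding fix_count_def
    using finite_subgroup[OF Q] finite_biset x subgroup.mem_carrier[OF Q] fixing_pair_unique
    by (intro card_UN_disjoint) fastforce+
  ultimately show ?thesis by simp
qed

lemma card_fixed_by_some_le_transport:
  assumes "F P \<phi>" "subgroup Q S" "x \<in> P"
  shows "card (fixed_by_some Q x) \<le> card (fixed_by_some Q (\<phi> x))"
proof -
  obtain f where f: "bij_betw f \<Omega> \<Omega>"
    and fixed: "\<And>u v w. u \<in> P \<Longrightarrow> v \<in> Q \<Longrightarrow> w \<in> \<Omega> \<Longrightarrow> act (u, v) w = w \<Longrightarrow> act (\<phi> u, v) (f w) = f w"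
    using stable_transport[OF assms(1) F_id[OF assms(2)]] by blast
  have "inj_on f (fixed_by_some Q x)"
    using f unfolding bij_betw_def fixed_by_some_def by (auto intro: inj_on_subset)
  moreover have "f ` fixed_by_some Q x \<subseteq> fixed_by_some Q (\<phi> x)"
    unfolding fixed_by_some_def using fixed[OF assms(3)] f bij_betwE by fastforce
  moreover have "finite (fixed_by_some Q (\<phi> x))"
    unfolding fixed_by_some_def using finite_biset by simp
  ultimately show ?thesis using card_inj_on_le by metis
qed

lemma card_fixed_by_some_fconj:
  assumes Q: "subgroup Q S" and x: "x \<in> carrier S" "x' \<in> carrier S"
    and conj: "fconj S F (generate S {x}) (generate S {x'})"
  shows "card (fixed_by_some Q x) = card (fixed_by_some Q x')"
proof -
  have le: "card (fixed_by_some Q a) \<le> card (fixed_by_some Q b)"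
    if b: "b \<in> carrier S" and conj_ab: "fconj S F (generate S {a}) (generate S {b})" for a b
  proof -
    obtain \<phi> where \<phi>: "F (generate S {a}) \<phi>" "\<phi> ` generate S {a} = generate S {b}"
      using conj_ab unfolding fconj_def by blast
    have "generate S {\<phi> a} = generate S {b}"
      using F_image_generate[OF \<phi>(1) generate_self] \<phi>(2) by simp
    then show ?thesis
      using card_fixed_by_some_le_transport[OF \<phi>(1) Q generate_self]
        fixed_by_some_generate_eq[OF Q F_mem[OF \<phi>(1) generate_self] b] by simp
  qed
  show ?thesis using le[OF x(2) conj] le[OF x(1) fconj_sym[OF conj]] by simp
qed

definition class_fixed_count :: "'a set \<Rightarrow> 'a set set \<Rightarrow> nat" where
  "class_fixed_count Q C = card (fixed_by_some Q (SOME x. x \<in> carrier S \<and> cyclic_class x = C))"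

lemma card_fixed_by_some_eq_class_fixed_count:
  assumes Q: "subgroup Q S" and x: "x \<in> carrier S"
  shows "card (fixed_by_some Q x) = class_fixed_count Q (cyclic_class x)"
proof -
  define x' where "x' = (SOME x'. x' \<in> carrier S \<and> cyclic_class x' = cyclic_class x)"
  have x': "x' \<in> carrier S" "cyclic_class x' = cyclic_class x"
    unfolding x'_def using someI[of "\<lambda>x'. x' \<in> carrier S \<and> cyclic_class x' = cyclic_class x"] x
    by blast+
  have "subgroup (generate S {x}) S" using x by (simp add: generate_is_subgroup)
  then have "fconj S F (generate S {x}) (generate S {x'})"
    using fconj_class_eq_iff x'(2) unfolding cyclic_class_def by blast
  then show ?thesis
    unfolding class_fixed_count_def x'_def[symmetric]
    using card_fixed_by_some_fconj[OF Q x x'(1)] by simp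
qed

lemma orbit_count_mult_orders:
  assumes P: "subgroup P S" and Q: "subgroup Q S"
  shows "orbit_count P Q * (card P * card Q)
    = (\<Sum>C\<in>cyclic_classes. class_fixed_count Q C * card {u \<in> P. cyclic_class u = C})"
proof -
  have P_carrier: "u \<in> P \<Longrightarrow> u \<in> carrier S" for u using subgroup.mem_carrier[OF P] .
  have "orbit_count P Q * (card P * card Q) = (\<Sum>u\<in>P. \<Sum>v\<in>Q. fix_count u v)"
    by (rule orbit_count_burnside[OF P finite_subgroup[OF P] Q finite_subgroup[OF Q]])
  also have "\<dots> = (\<Sum>u\<in>P. class_fixed_count Q (cyclic_class u))"
    using sum_fix_count_row[OF Q] card_fixed_by_some_eq_class_fixed_count[OF Q] P_carrier
    by (intro sum.cong) auto
  also have "\<dots> = (\<Sum>C\<in>cyclic_classes. \<Sum>u\<in>{u \<in> P. cyclic_class u = C}. class_fixed_count Q (cyclic_class u))"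
    using P_carrier unfolding cyclic_classes_def
    by (intro sum.group[symmetric] finite_subgroup[OF P] finite_imageI[OF finite_S]) auto
  also have "\<dots> = (\<Sum>C\<in>cyclic_classes. class_fixed_count Q C * card {u \<in> P. cyclic_class u = C})"
    by (rule sum.cong[OF refl]) (simp add: mult.commute)
  finally show ?thesis .
qed

lemma orbit_count_cyclic_expansion:
  assumes P: "subgroup P S" and Q: "subgroup Q S"
  shows "(of_nat (orbit_count P Q) :: rat)
    = (\<Sum>C\<in>cyclic_classes. of_nat (class_fixed_count Q C) / of_nat (card Q)
                          * (of_nat (card {u \<in> P. cyclic_class u = C}) / of_nat (card P)))"
proof -
  have "(of_nat (orbit_count P Q) :: rat) * (of_nat (card P) * of_nat (card Q))
      = (\<Sum>C\<in>cyclic_classes. of_nat (class_fixed_count Q C) * of_nat (card {u \<in> P. cyclic_class u = C}))"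
    using arg_cong[OF orbit_count_mult_orders[OF P Q], of "of_nat :: nat \<Rightarrow> rat"] by simp
  then have "(of_nat (orbit_count P Q) :: rat)
      = (\<Sum>C\<in>cyclic_classes. of_nat (class_fixed_count Q C) * of_nat (card {u \<in> P. cyclic_class u = C}))
        / (of_nat (card P) * of_nat (card Q))"
    using card_subgroup_pos[OF P] card_subgroup_pos[OF Q] by (simp add: field_simps)
  then show ?thesis by (simp add: sum_divide_distrib ac_simps)
qed

lemma rank_orbit_count_matrix_le:
  assumes sub: "\<forall>P \<in> set Ps. subgroup P S"
  shows "vec_space.rank (length Ps)
      (mat (length Ps) (length Ps) (\<lambda>(i, j). (of_nat (orbit_count (Ps ! i) (Ps ! j)) :: rat)))
    \<le> card cyclic_classes"
proof (rule vec_space.rank_le_card_of_sum_of_products[where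
      f = "\<lambda>C i. of_nat (card {u \<in> Ps ! i. cyclic_class u = C}) / of_nat (card (Ps ! i))"
      and g = "\<lambda>C j. of_nat (class_fixed_count (Ps ! j) C) / of_nat (card (Ps ! j))"])
  show "finite cyclic_classes" unfolding cyclic_classes_def using finite_S by simp
  fix i j assume ij: "i < length Ps" "j < length Ps"
  then have "subgroup (Ps ! i) S" "subgroup (Ps ! j) S" using sub nth_mem by blast+
  then show "mat (length Ps) (length Ps) (\<lambda>(i, j). (of_nat (orbit_count (Ps ! i) (Ps ! j)) :: rat)) $$ (i, j)
    = (\<Sum>C\<in>cyclic_classes. of_nat (card {u \<in> Ps ! i. cyclic_class u = C}) / of_nat (card (Ps ! i))
                          * (of_nat (class_fixed_count (Ps ! j) C) / of_nat (card (Ps ! j))))"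
    using ij orbit_count_cyclic_expansion by (simp add: mult.commute)
qed simp

lemma orbit_count_as_fix_count_form:
  assumes P: "subgroup P S" and Q: "subgroup Q S"
  shows "of_nat (orbit_count P Q) * (of_nat (card P) * of_nat (card Q))
    = (\<Sum>x\<in>carrier S. \<Sum>y\<in>carrier S. of_bool (x \<in> P) * of_bool (y \<in> Q) * (of_nat (fix_count x y) :: rat))"
proof -
  have sub: "carrier S \<inter> {x. x \<in> P} = P" "carrier S \<inter> {x. x \<in> Q} = Q"
    using subgroup.subset[OF P] subgroup.subset[OF Q] by auto
  have "(of_nat (orbit_count P Q) :: rat) * (of_nat (card P) * of_nat (card Q))
      = (\<Sum>x\<in>P. \<Sum>y\<in>Q. of_nat (fix_count x y))"
    using arg_cong[OF orbit_count_burnside[OF P finite_subgroup[OF P] Q finite_subgroup[OF Q]],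
        of "of_nat :: nat \<Rightarrow> rat"] by simp
  also have "\<dots> = (\<Sum>x\<in>carrier S. of_bool (x \<in> P) * (\<Sum>y\<in>carrier S. of_bool (y \<in> Q) * of_nat (fix_count x y)))"
    using finite_S sub by simp
  finally show ?thesis by (simp add: sum_distrib_left mult.assoc)
qed

lemma fused_class_sums_zero:
  fixes W :: "'a \<Rightarrow> rat"
  assumes form: "(\<Sum>x\<in>carrier S. \<Sum>y\<in>carrier S. of_nat (fix_count x y) * W x * W y) = 0"
    and x: "x \<in> carrier S"
  shows "(\<Sum>y\<in>{y \<in> carrier S. fused x y}. W y) = 0"
proof (rule equiv_class_sums_zero_of_form_zero[where c = "\<lambda>x. of_nat (fix_count x x)", OF finite_S])
  have "(if fused x y then of_nat (fix_count x x) * W x * W y else 0) = of_nat (fix_count x y) * W x * W y"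
    if "x \<in> carrier S" "y \<in> carrier S" for x y
    using fix_count_unless_fused[OF that] by simp
  then show "(\<Sum>x\<in>carrier S. \<Sum>y\<in>carrier S. if fused x y then of_nat (fix_count x x) * W x * W y else 0) = 0"
    using form by simp
  show "\<And>x. x \<in> carrier S \<Longrightarrow> fused x x" by (rule fused_refl)
  show "\<And>x y. x \<in> carrier S \<Longrightarrow> y \<in> carrier S \<Longrightarrow> fused x y \<Longrightarrow> fused y x"
    using fused_sym by blast
  show "\<And>x y z. x \<in> carrier S \<Longrightarrow> y \<in> carrier S \<Longrightarrow> z \<in> carrier S \<Longrightarrow>
      fused x y \<Longrightarrow> fused y z \<Longrightarrow> fused x z"
    using fused_trans by blast
  show "\<And>x y. x \<in> carrier S \<Longrightarrow> y \<in> carrier S \<Longrightarrow> fused x y \<Longrightarrow>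
      (of_nat (fix_count x x) :: rat) = of_nat (fix_count y y)"
    using fix_count_fused(2) by metis
  show "\<And>x. x \<in> carrier S \<Longrightarrow> (0 :: rat) < of_nat (fix_count x x)"
    using fix_count_diag_pos by simp
qed (rule x)

lemma fused_class_disjoint:
  assumes g: "g \<in> carrier S" and Q: "subgroup Q S"
    and le: "card Q \<le> card (generate S {g})" and not_conj: "\<not> fconj S F (generate S {g}) Q"
  shows "{y \<in> carrier S. fused g y} \<inter> Q = {}"
  using fconj_of_fused_mem[OF g _ Q finite_subgroup[OF Q] _ le] not_conj by blast

lemma cyclic_weights_zero:
  fixes w :: "'i \<Rightarrow> rat"
  assumes J: "finite J"
    and cyclic: "\<And>a. a \<in> J \<Longrightarrow> \<exists>g\<in>carrier S. P a = generate S {g}"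
    and distinct: "\<And>a b. a \<in> J \<Longrightarrow> b \<in> J \<Longrightarrow> fconj S F (P a) (P b) \<Longrightarrow> a = b"
    and class_sums: "\<And>x. x \<in> carrier S \<Longrightarrow>
      (\<Sum>y\<in>{y \<in> carrier S. fused x y}. \<Sum>a\<in>J. w a * of_bool (y \<in> P a)) = 0"
  shows "\<forall>a\<in>J. w a = 0"
proof (rule ccontr)
  assume "\<not> (\<forall>a\<in>J. w a = 0)"
  then have D: "finite {a \<in> J. w a \<noteq> 0}" "{a \<in> J. w a \<noteq> 0} \<noteq> {}" using J by auto
  (* Test the class sums against a generator of a largest subgroup with non-zero weight. *)
  obtain a0 where a0: "a0 \<in> J" "w a0 \<noteq> 0"
    and a0_max: "Max ((\<lambda>a. card (P a)) ` {a \<in> J. w a \<noteq> 0}) = card (P a0)"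
    using obtains_MAX[OF D, where f = "\<lambda>a. card (P a)"] by blast
  have largest: "card (P a) \<le> card (P a0)" if "a \<in> J" "w a \<noteq> 0" for a
  proof -
    have mem: "card (P a) \<in> (\<lambda>a. card (P a)) ` {a \<in> J. w a \<noteq> 0}" using that by blast
    show ?thesis using Max_ge[OF finite_imageI[OF D(1)] mem] a0_max by simp
  qed
  obtain g where g: "g \<in> carrier S" "P a0 = generate S {g}" using cyclic a0(1) by blast
  define Y where "Y = {y \<in> carrier S. fused g y}"
  have finY: "finite Y" unfolding Y_def using finite_S by simp
  have others: "w a * of_nat (card (Y \<inter> P a)) = 0" if a: "a \<in> J - {a0}" for a
  proof (cases "w a = 0")
    case False
    have aJ: "a \<in> J" using a by simp
    have "card (P a) \<le> card (generate S {g})" using largest[OF aJ False] g(2) by simp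
    moreover have "\<not> fconj S F (generate S {g}) (P a)" using distinct[OF a0(1) aJ] a g(2) by auto
    moreover have "subgroup (P a) S" using cyclic[OF aJ] generate_is_subgroup by auto
    ultimately have "Y \<inter> P a = {}" unfolding Y_def using fused_class_disjoint[OF g(1)] by blast
    then show ?thesis by simp
  qed simp
  have "(\<Sum>a\<in>J. w a * of_nat (card (Y \<inter> P a))) = (\<Sum>y\<in>Y. \<Sum>a\<in>J. w a * of_bool (y \<in> P a))"
    using finY by (subst sum.swap) (simp add: mult.commute)
  also have "\<dots> = 0" using class_sums[OF g(1)] unfolding Y_def .
  finally have "(\<Sum>a\<in>J. w a * of_nat (card (Y \<inter> P a))) = 0" .
  moreover have "(\<Sum>a\<in>J - {a0}. w a * of_nat (card (Y \<inter> P a))) = 0"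
    using others by (intro sum.neutral ballI)
  ultimately have "w a0 * of_nat (card (Y \<inter> P a0)) = 0"
    using sum.remove[OF J a0(1), of "\<lambda>a. w a * of_nat (card (Y \<inter> P a))"] by simp
  moreover have "card (Y \<inter> P a0) > 0"
  proof -
    have "g \<in> Y \<inter> P a0" unfolding Y_def using g fused_refl generate_self by simp
    then show ?thesis using finY by (auto simp: card_gt_0_iff)
  qed
  ultimately show False using a0(2) by simp
qed

lemma orbit_count_cyclic_block_kernel:
  fixes v :: "'i \<Rightarrow> rat"
  assumes J: "finite J"
    and cyclic: "\<And>a. a \<in> J \<Longrightarrow> \<exists>g\<in>carrier S. P a = generate S {g}"
    and distinct: "\<And>a b. a \<in> J \<Longrightarrow> b \<in> J \<Longrightarrow> fconj S F (P a) (P b) \<Longrightarrow> a = b"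
    and kernel: "\<And>a. a \<in> J \<Longrightarrow> (\<Sum>b\<in>J. of_nat (orbit_count (P a) (P b)) * v b) = 0"
  shows "\<forall>b\<in>J. v b = 0"
proof -
  have sub: "subgroup (P a) S" if "a \<in> J" for a
    using cyclic[OF that] generate_is_subgroup by auto
  define c where "c a = (of_nat (card (P a)) :: rat)" for a
  have c: "c a \<noteq> 0" if "a \<in> J" for a
    unfolding c_def using card_subgroup_pos[OF sub[OF that]] by simp
  define w where "w a = v a / c a" for a
  define W where "W x = (\<Sum>a\<in>J. w a * of_bool (x \<in> P a))" for x
  have "(\<Sum>x\<in>carrier S. \<Sum>y\<in>carrier S. of_nat (fix_count x y) * W x * W y)
      = (\<Sum>a\<in>J. \<Sum>b\<in>J. w a * w b * (\<Sum>x\<in>carrier S. \<Sum>y\<in>carrier S.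
            of_bool (x \<in> P a) * of_bool (y \<in> P b) * of_nat (fix_count x y)))"
    unfolding W_def
    by (rule sum_sum_bilinear[of w "\<lambda>a x. of_bool (x \<in> P a)" "\<lambda>x y. of_nat (fix_count x y)", symmetric])
  also have "\<dots> = (\<Sum>a\<in>J. \<Sum>b\<in>J. w a * w b * (of_nat (orbit_count (P a) (P b)) * (c a * c b)))"
    unfolding c_def by (intro sum.cong refl) (simp_all add: orbit_count_as_fix_count_form sub)
  also have "\<dots> = (\<Sum>a\<in>J. \<Sum>b\<in>J. v a * (of_nat (orbit_count (P a) (P b)) * v b))"
  proof (rule sum.cong[OF refl], rule sum.cong[OF refl])
    fix a b assume "a \<in> J" "b \<in> J"
    then show "w a * w b * (of_nat (orbit_count (P a) (P b)) * (c a * c b))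
        = v a * (of_nat (orbit_count (P a) (P b)) * v b)"
      using c[of a] c[of b] unfolding w_def by (simp add: field_simps)
  qed
  also have "\<dots> = 0" using kernel by (simp add: sum_distrib_left[symmetric])
  finally have form: "(\<Sum>x\<in>carrier S. \<Sum>y\<in>carrier S. of_nat (fix_count x y) * W x * W y) = 0" .
  have "\<forall>a\<in>J. w a = 0"
  proof (rule cyclic_weights_zero[OF J cyclic distinct])
    fix x assume "x \<in> carrier S"
    then show "(\<Sum>y\<in>{y \<in> carrier S. fused x y}. \<Sum>a\<in>J. w a * of_bool (y \<in> P a)) = 0"
      using fused_class_sums_zero[OF form] by (simp add: W_def)
  qed
  then show ?thesis using c unfolding w_def by simp
qed

lemma card_cyclic_representatives:
  assumes sub: "\<forall>P \<in> set Ps. subgroup P S"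
    and distinct: "\<forall>i j. i < length Ps \<and> j < length Ps \<and> fconj S F (Ps ! i) (Ps ! j) \<longrightarrow> i = j"
    and cover: "\<forall>P. subgroup P S \<longrightarrow> (\<exists>Q \<in> set Ps. fconj S F P Q)"
  shows "card {i. i < length Ps \<and> (\<exists>g\<in>carrier S. Ps ! i = generate S {g})} = card cyclic_classes"
proof (rule bij_betw_same_card[of "\<lambda>i. {Q. fconj S F (Ps ! i) Q}"], rule bij_betw_imageI)
  let ?J = "{i. i < length Ps \<and> (\<exists>g\<in>carrier S. Ps ! i = generate S {g})}"
  show "inj_on (\<lambda>i. {Q. fconj S F (Ps ! i) Q}) ?J"
  proof (rule inj_onI)
    fix i j assume i: "i \<in> ?J" and j: "j \<in> ?J"
      and eq: "{Q. fconj S F (Ps ! i) Q} = {Q. fconj S F (Ps ! j) Q}"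
    have "subgroup (Ps ! i) S" using sub i by simp
    then have "fconj S F (Ps ! i) (Ps ! j)" using fconj_class_eq_iff eq by blast
    then show "i = j" using distinct i j by blast
  qed
  show "(\<lambda>i. {Q. fconj S F (Ps ! i) Q}) ` ?J = cyclic_classes"
  proof (intro equalityI subsetI)
    fix C assume "C \<in> (\<lambda>i. {Q. fconj S F (Ps ! i) Q}) ` ?J"
    then obtain i g where "g \<in> carrier S" "C = {Q. fconj S F (generate S {g}) Q}" by auto
    then show "C \<in> cyclic_classes" unfolding cyclic_classes_def cyclic_class_def by blast
  next
    fix C assume "C \<in> cyclic_classes"
    then obtain x where x: "x \<in> carrier S" "C = {Q. fconj S F (generate S {x}) Q}"
      unfolding cyclic_classes_def cyclic_class_def by blast
    have gen: "subgroup (generate S {x}) S" using x(1) by (simp add: generate_is_subgroup)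
    then obtain Q where "Q \<in> set Ps" "fconj S F (generate S {x}) Q" using cover by blast
    then obtain i where i: "i < length Ps" "fconj S F (generate S {x}) (Ps ! i)"
      by (auto simp: in_set_conv_nth)
    then obtain y where y: "fused x y" "Ps ! i = generate S {y}"
      using fconj_generate_iff[OF x(1)] by blast
    have "i \<in> ?J" using i(1) y fused_carrier by blast
    moreover have "C = {Q. fconj S F (Ps ! i) Q}" using x(2) fconj_class_eq_iff[OF gen] i(2) by simp
    ultimately show "C \<in> (\<lambda>i. {Q. fconj S F (Ps ! i) Q}) ` ?J" by blast
  qed
qed

lemma rank_orbit_count_matrix_ge:
  assumes sub: "\<forall>P \<in> set Ps. subgroup P S"
    and distinct: "\<forall>i j. i < length Ps \<and> j < length Ps \<and> fconj S F (Ps ! i) (Ps ! j) \<longrightarrow> i = j"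
    and cover: "\<forall>P. subgroup P S \<longrightarrow> (\<exists>Q \<in> set Ps. fconj S F P Q)"
  shows "card cyclic_classes \<le> vec_space.rank (length Ps)
      (mat (length Ps) (length Ps) (\<lambda>(i, j). (of_nat (orbit_count (Ps ! i) (Ps ! j)) :: rat)))"
proof -
  let ?J = "{i. i < length Ps \<and> (\<exists>g\<in>carrier S. Ps ! i = generate S {g})}"
  have "card ?J \<le> vec_space.rank (length Ps)
      (mat (length Ps) (length Ps) (\<lambda>(i, j). (of_nat (orbit_count (Ps ! i) (Ps ! j)) :: rat)))"
  proof (rule vec_space.rank_ge_card_of_nonsingular_block)
    fix v :: "nat \<Rightarrow> rat"
    assume kernel: "\<And>i. i \<in> ?J \<Longrightarrow> (\<Sum>j\<in>?J.
      mat (length Ps) (length Ps) (\<lambda>(i, j). of_nat (orbit_count (Ps ! i) (Ps ! j))) $$ (i, j) * v j) = 0"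
    show "\<forall>j\<in>?J. v j = 0"
    proof (rule orbit_count_cyclic_block_kernel[where P = "(!) Ps"])
      show "\<And>a b. a \<in> ?J \<Longrightarrow> b \<in> ?J \<Longrightarrow> fconj S F (Ps ! a) (Ps ! b) \<Longrightarrow> a = b"
        using distinct by blast
      show "(\<Sum>b\<in>?J. of_nat (orbit_count (Ps ! a) (Ps ! b)) * v b) = 0" if "a \<in> ?J" for a
      proof -
        have "(\<Sum>b\<in>?J. of_nat (orbit_count (Ps ! a) (Ps ! b)) * v b)
            = (\<Sum>b\<in>?J. mat (length Ps) (length Ps) (\<lambda>(i, j). of_nat (orbit_count (Ps ! i) (Ps ! j))) $$ (a, b) * v b)"
          by (rule sum.cong[OF refl]) (use that in simp)
        then show ?thesis using kernel[OF that] by simp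
      qed
    qed auto
  qed auto
  then show ?thesis using card_cyclic_representatives[OF sub distinct cover] by simp
qed

end

theorem theorem1p3:
  fixes p :: nat
    and S :: "('a, 'b) monoid_scheme"
    and F :: "'a set \<Rightarrow> ('a \<Rightarrow> 'a) \<Rightarrow> bool"
    and \<Omega> :: "'c set"
    and L :: "'a \<Rightarrow> 'c \<Rightarrow> 'c"
    and R :: "'c \<Rightarrow> 'a \<Rightarrow> 'c"
    and Ps :: "'a set list"
  assumes "prime p"
    and "group S"
    and "finite (carrier S)"
    and "\<exists>n. card (carrier S) = p ^ n"
    and "saturated_fusion_system p S F"
    and "characteristic_biset p S F \<Omega> L R"
    and "\<forall>P \<in> set Ps. subgroup P S"
    and "\<forall>i j. i < length Ps \<and> j < length Ps \<and> fconj S F (Ps ! i) (Ps ! j) \<longrightarrow> i = j"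
    and "\<forall>P. subgroup P S \<longrightarrow> (\<exists>Q \<in> set Ps. fconj S F P Q)"
  shows "vec_space.rank (length Ps)
           (mat (length Ps) (length Ps)
              (\<lambda>(i, j). (of_nat (biset_orbit_count S \<Omega> L R (Ps ! i) (Ps ! j)) :: rat)))
         = card {C. \<exists>P. subgroup P S \<and> cyclic_group (S\<lparr>carrier := P\<rparr>) \<and> C = {Q. fconj S F P Q}}"
proof -
  interpret characteristic_biset_on S F \<Omega> L R p
    using assms(1-6)
    unfolding characteristic_biset_on_def characteristic_biset_on_axioms_def fusion_system_on_def
      fusion_system_on_axioms_def biset_action_def biset_action_axioms_def
      saturated_fusion_system_def characteristic_biset_def
    by blast
  show ?thesis
    using rank_orbit_count_matrix_le[OF assms(7)] rank_orbit_count_matrix_ge[OF assms(7-9)]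
    unfolding cyclic_classes_eq by simp
qed

end
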